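(* Let $\mathcal A=\{\ell_1,\dots,\ell_n\}$ be an arrangement of affine lines in $\mathbb C^2$ whose graph of double points $\Gamma$ is connected. Then the projectivization $\overline{\mathcal A}$ of the cone $c\mathcal A$ does not support any multinet structure, i.e. for no multiplicity function $m:\overline{\mathcal A}\to\mathbb Z_{>0}$ is there a multinet on $(\overline{\mathcal A},m)$.
   Context: The graph of double points $\Gamma$ of $\mathcal A$ has vertex set $\mathcal A$, with an edge $\{\ell_i,\ell_j\}$ iff $\ell_i\cap\ell_j$ is a point lying on no other line of $\mathcal A$. The cone $c\mathcal A$ is the central arrangement of $n+1$ planes in $\mathbb C^3$ consisting of the coordinate plane $z_0=0$ and the zero sets of the homogenizations (with respect to $z_0$) of the defining linear polynomials of the $\ell_i$. Its projectivization $\overline{\mathcal A}$ is the arrangement of $n+1$ lines in $\mathbb P^2$ (the projective closures of the $\ell_i$ and the line at infinity). A multinet on a multiarrangement $(\overline{\mathcal A},m)$ (Falk–Yuzvinsky) consists of a partition of $\overline{\mathcal A}$ into $k\ge 3$ nonempty classes $\overline{\mathcal A}_1,\dots,\overline{\mathcal A}_k$ and a set $\mathcal X$ of points of $\mathbb P^2$ such that: (i) $\sum_{\ell\in\overline{\mathcal A}_i}m(\ell)$ is independent of $i$; (ii) if $\ell\in\overline{\mathcal A}_i$, $\ell'\in\overline{\mathcal A}_j$ with $i\ne j$, then $\ell\cap\ell'\in\mathcal X$; (iii) for each $p\in\mathcal X$, $\sum_{\ell\in\overline{\mathcal A}_i,\,p\in\ell}m(\ell)$ is independent of $i$; (iv)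 for each $i$ and any $\ell,\ell'\in\overline{\mathcal A}_i$ there is a sequence $\ell=\ell_0,\ell_1,\dots,\ell_r=\ell'$ in $\overline{\mathcal A}_i$ with $\ell_{s-1}\cap\ell_s\notin\mathcal X$ for all $s$. *)

theory Defs
  imports Main "HOL.Complex"
begin

type_synonym cpt2 = "complex \<times> complex"

definition aff_coeffs_ok :: "complex \<times> complex \<times> complex \<Rightarrow> bool" where
  "aff_coeffs_ok f = (case f of (a, b, c) \<Rightarrow> (a, b) \<noteq> (0, 0))"

definition aff_line :: "complex \<times> complex \<times> complex \<Rightarrow> cpt2 set" where
  "aff_line f = (case f of (a, b, c) \<Rightarrow> {(x, y). a * x + b * y + c = 0})"

definition is_aff_line :: "cpt2 set \<Rightarrow> bool" where
  "is_aff_line L = (\<exists>f. aff_coeffs_ok f \<and> L = aff_line f)"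

definition dp_edge :: "cpt2 set set \<Rightarrow> cpt2 set \<Rightarrow> cpt2 set \<Rightarrow> bool" where
  "dp_edge A L L' = (L \<in> A \<and> L' \<in> A \<and> L \<noteq> L' \<and>
     (\<exists>q. L \<inter> L' = {q} \<and> (\<forall>M \<in> A - {L, L'}. q \<notin> M)))"

definition dp_graph_connected :: "cpt2 set set \<Rightarrow> bool" where
  "dp_graph_connected A = (\<forall>L \<in> A. \<forall>L' \<in> A. (dp_edge A)\<^sup>*\<^sup>* L L')"

type_synonym cvec3 = "complex \<times> complex \<times> complex"

definition smul3 :: "complex \<Rightarrow> cvec3 \<Rightarrow> cvec3" where
  "smul3 t v = (case v of (a, b, c) \<Rightarrow> (t * a, t * b, t * c))"

text \<open>A point of P^2 is the set of nonzero representatives of a line through 0 in C^3.\<close>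
definition ppoint :: "cvec3 \<Rightarrow> cvec3 set" where
  "ppoint v = {smul3 t v | t. t \<noteq> 0}"

definition proj_points :: "cvec3 set set" where
  "proj_points = {ppoint v | v. v \<noteq> (0, 0, 0)}"

definition pline :: "cvec3 \<Rightarrow> cvec3 set set" where
  "pline h = {P \<in> proj_points. \<forall>z \<in> P. (case h of (a0, a1, a2) \<Rightarrow> case z of (z0, z1, z2) \<Rightarrow>
              a0 * z0 + a1 * z1 + a2 * z2 = 0)}"

text \<open>Homogenization w.r.t. z0 of a*x + b*y + c (with x = z1, y = z2): c*z0 + a*z1 + b*z2.\<close>
definition homog :: "complex \<times> complex \<times> complex \<Rightarrow> cvec3" where
  "homog f = (case f of (a, b, c) \<Rightarrow> (c, a, b))"

definition proj_closure :: "cpt2 set \<Rightarrow> cvec3 set set" where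
  "proj_closure L = pline (homog (SOME f. aff_coeffs_ok f \<and> L = aff_line f))"

definition line_infinity :: "cvec3 set set" where
  "line_infinity = pline (1, 0, 0)"

definition proj_cone :: "cpt2 set set \<Rightarrow> cvec3 set set set" where
  "proj_cone A = proj_closure ` A \<union> {line_infinity}"

text \<open>Partition into classes indexed by {..<k} via cls; X a set of points of P^2.\<close>
definition is_multinet ::
  "cvec3 set set set \<Rightarrow> (cvec3 set set \<Rightarrow> nat) \<Rightarrow> nat \<Rightarrow> (cvec3 set set \<Rightarrow> nat)
     \<Rightarrow> cvec3 set set \<Rightarrow> bool" where
  "is_multinet B m k cls X =
    (k \<ge> 3 \<and>
     (\<forall>l \<in> B. cls l < k) \<and>
     (\<forall>i < k. \<exists>l \<in> B. cls l = i) \<and>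
     X \<subseteq> proj_points \<and>
     (\<exists>d. \<forall>i < k. (\<Sum>l \<in> {l \<in> B. cls l = i}. m l) = d) \<and>
     (\<forall>l \<in> B. \<forall>l' \<in> B. cls l \<noteq> cls l' \<longrightarrow> l \<inter> l' \<subseteq> X) \<and>
     (\<forall>p \<in> X. \<exists>d. \<forall>i < k. (\<Sum>l \<in> {l \<in> B. cls l = i \<and> p \<in> l}. m l) = d) \<and>
     (\<forall>i < k. \<forall>l \<in> B. \<forall>l' \<in> B. cls l = i \<longrightarrow> cls l' = i \<longrightarrow>
        (\<lambda>a b. a \<in> B \<and> b \<in> B \<and> cls a = i \<and> cls b = i \<and> a \<inter> b \<inter> X = {})\<^sup>*\<^sup>* l l'))"

definition supports_multinet :: "cvec3 set set set \<Rightarrow> bool" where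
  "supports_multinet B =
    (\<exists>m. (\<forall>l \<in> B. m l > 0) \<and> (\<exists>k cls X. is_multinet B m k cls X))"

end

theory Submission
  imports Defs
begin

text \<open>If two lines of different classes met at a point of the affine chart that lies on
  no third line, condition (iii) of the multinet axioms would force a line of a third class
  through that point. Hence the two lines of every edge of the graph of double points lie
  in the same class, and connectivity puts all affine lines into a single class. Together
  with the line at infinity this leaves at most two classes, contradicting \<open>k \<ge> 3\<close>.\<close>

lemma mem_ppoint_self: "v \<in> ppoint v"
  unfolding ppoint_def by (rule CollectI, rule exI[of _ 1]) (simp add: smul3_def split: prod.splits)

lemma ppoint_affine_in_proj_points: "ppoint (1, x, y) \<in> proj_points"
  unfolding proj_points_def by (rule CollectI, rule exI[of _ "(1, x, y)"]) simp

lemma ppoint_affine_mem_proj_closure_iff: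
  assumes "is_aff_line M"
  shows "ppoint (1, x, y) \<in> proj_closure M \<longleftrightarrow> (x, y) \<in> M"
proof -
  let ?f = "SOME f. aff_coeffs_ok f \<and> M = aff_line f"
  have f: "M = aff_line ?f"
    by (rule someI2_ex) (use assms in \<open>auto simp: is_aff_line_def\<close>)
  obtain a b c where abc: "?f = (a, b, c)" by (cases ?f) auto
  have "ppoint (1, x, y) \<in> proj_closure M \<longleftrightarrow>
      (\<forall>z \<in> ppoint (1, x, y). c * fst z + a * fst (snd z) + b * snd (snd z) = 0)"
    using ppoint_affine_in_proj_points
    unfolding proj_closure_def abc homog_def pline_def by (auto split: prod.splits)
  also have "\<dots> \<longleftrightarrow> c + a * x + b * y = 0"
  proof
    assume "\<forall>z \<in> ppoint (1, x, y). c * fst z + a * fst (snd z) + b * snd (snd z) = 0"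
    from this[rule_format, OF mem_ppoint_self] show "c + a * x + b * y = 0" by simp
  next
    assume h: "c + a * x + b * y = 0"
    show "\<forall>z \<in> ppoint (1, x, y). c * fst z + a * fst (snd z) + b * snd (snd z) = 0"
    proof
      fix z assume "z \<in> ppoint (1, x, y)"
      then obtain t where "z = (t, t * x, t * y)" unfolding ppoint_def smul3_def by auto
      then have "c * fst z + a * fst (snd z) + b * snd (snd z) = t * (c + a * x + b * y)"
        by (simp add: algebra_simps)
      then show "c * fst z + a * fst (snd z) + b * snd (snd z) = 0" using h by simp
    qed
  qed
  also have "\<dots> \<longleftrightarrow> (x, y) \<in> M"
    using f abc by (auto simp: aff_line_def add.commute add.left_commute)
  finally show ?thesis .
qed

lemma ppoint_affine_notin_line_infinity: "ppoint (1, x, y) \<notin> line_infinity"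
proof
  assume "ppoint (1, x, y) \<in> line_infinity"
  then have "\<forall>z \<in> ppoint (1, x, y). fst z = 0"
    by (auto simp: line_infinity_def pline_def split: prod.splits)
  then show False using mem_ppoint_self[of "(1, x, y)"] by fastforce
qed

lemma multinet_classes:
  assumes "is_multinet B m k cls X"
  shows "{..<k} \<subseteq> cls ` B" and "3 \<le> k"
proof -
  have "\<forall>i < k. \<exists>l \<in> B. cls l = i"
    using assms unfolding is_multinet_def by (elim conjE) assumption
  then show "{..<k} \<subseteq> cls ` B" by (auto simp: image_iff)
  show "3 \<le> k" using assms unfolding is_multinet_def by (elim conjE) assumption
qed

lemma multinet_point_meets_every_class:
  assumes mn: "is_multinet B m k cls X" and "finite B" and m_pos: "\<forall>l \<in> B. 0 < m l"
    and l: "l \<in> B" "p \<in> l" and l': "l' \<in> B" "p \<in> l'" and "cls l \<noteq> cls l'" and "i < k"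
  shows "\<exists>l'' \<in> B. cls l'' = i \<and> p \<in> l''"
proof -
  have cls_lt: "\<forall>l \<in> B. cls l < k"
    using mn unfolding is_multinet_def by (elim conjE) assumption
  have meet: "\<forall>l \<in> B. \<forall>l' \<in> B. cls l \<noteq> cls l' \<longrightarrow> l \<inter> l' \<subseteq> X"
    using mn unfolding is_multinet_def by (elim conjE) assumption
  have balanced: "\<forall>p \<in> X. \<exists>d. \<forall>j < k. (\<Sum>l \<in> {l \<in> B. cls l = j \<and> p \<in> l}. m l) = d"
    using mn unfolding is_multinet_def by (elim conjE) assumption
  have "p \<in> X" using meet l l' \<open>cls l \<noteq> cls l'\<close> by blast
  then obtain d where d: "\<forall>j < k. (\<Sum>l \<in> {l \<in> B. cls l = j \<and> p \<in> l}. m l) = d"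
    using balanced by blast
  have "cls l < k" using cls_lt l by blast
  have "0 < m l" using m_pos l by blast
  also have "m l \<le> (\<Sum>l \<in> {l'' \<in> B. cls l'' = cls l \<and> p \<in> l''}. m l)"
    by (rule member_le_sum) (use \<open>finite B\<close> l in auto)
  also have "\<dots> = (\<Sum>l \<in> {l'' \<in> B. cls l'' = i \<and> p \<in> l''}. m l)"
    using d \<open>cls l < k\<close> \<open>i < k\<close> by simp
  finally have "{l'' \<in> B. cls l'' = i \<and> p \<in> l''} \<noteq> {}" by force
  then show ?thesis by blast
qed

lemma multinet_proj_cone_dp_edge_same_class:
  assumes "\<forall>L \<in> A. is_aff_line L" and "finite A"
    and mn: "is_multinet (proj_cone A) m k cls X" and "\<forall>l \<in> proj_cone A. 0 < m l"
    and e: "dp_edge A L L'"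
  shows "cls (proj_closure L) = cls (proj_closure L')"
proof (rule ccontr)
  assume ne: "cls (proj_closure L) \<noteq> cls (proj_closure L')"
  from e have LA: "L \<in> A" "L' \<in> A" unfolding dp_edge_def by auto
  from e obtain q where q: "L \<inter> L' = {q}" "\<forall>M \<in> A - {L, L'}. q \<notin> M"
    unfolding dp_edge_def by blast
  obtain x y where q_xy: "q = (x, y)" by (cases q)
  let ?P = "ppoint (1, x, y)"
  have on_L: "?P \<in> proj_closure L" "?P \<in> proj_closure L'"
    using ppoint_affine_mem_proj_closure_iff assms(1) LA q(1) q_xy by blast+
  have in_cone: "proj_closure L \<in> proj_cone A" "proj_closure L' \<in> proj_cone A"
    using LA unfolding proj_cone_def by auto
  have "finite (proj_cone A)" using \<open>finite A\<close> unfolding proj_cone_def by simp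
  have "\<exists>j \<in> {0, 1, 2 :: nat}. j \<noteq> cls (proj_closure L) \<and> j \<noteq> cls (proj_closure L')"
    by auto
  then obtain j where "j \<in> {0, 1, 2}"
    and j: "j \<noteq> cls (proj_closure L)" "j \<noteq> cls (proj_closure L')"
    by blast
  then have "j < k" using multinet_classes(2)[OF mn] by auto
  obtain l where l: "l \<in> proj_cone A" "cls l = j" "?P \<in> l"
    using multinet_point_meets_every_class[OF mn \<open>finite (proj_cone A)\<close> assms(4)
        in_cone(1) on_L(1) in_cone(2) on_L(2) ne \<open>j < k\<close>]
    by blast
  have "l \<noteq> line_infinity" using l(3) ppoint_affine_notin_line_infinity by metis
  then obtain M where M: "M \<in> A" "l = proj_closure M"
    using l(1) unfolding proj_cone_def by auto
  then have "q \<in> M"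
    using ppoint_affine_mem_proj_closure_iff assms(1) l(3) q_xy by blast
  then have "M = L \<or> M = L'" using q(2) M(1) by blast
  then show False using j l M by auto
qed

theorem theorem3p1:
  fixes A :: "(complex \<times> complex) set set"
  assumes "finite A"
    and "\<forall>L \<in> A. is_aff_line L"
    and "dp_graph_connected A"
  shows "\<not> supports_multinet (proj_cone A)"
proof
  assume "supports_multinet (proj_cone A)"
  then obtain m k cls X where m_pos: "\<forall>l \<in> proj_cone A. 0 < m l"
    and mn: "is_multinet (proj_cone A) m k cls X"
    unfolding supports_multinet_def by blast
  have same_class: "cls (proj_closure L) = cls (proj_closure L')" if "L \<in> A" "L' \<in> A" for L L'
  proof -
    have "(dp_edge A)\<^sup>*\<^sup>* L L'"
      using assms(3) that unfolding dp_graph_connected_def by blast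
    then show ?thesis
      by (induction rule: rtranclp_induct)
        (simp_all add: multinet_proj_cone_dp_edge_same_class[OF assms(2,1) mn m_pos])
  qed
  obtain c where "cls ` proj_cone A \<subseteq> {c, cls line_infinity}"
    using same_class unfolding proj_cone_def by blast
  moreover have "{0, 1, 2} \<subseteq> cls ` proj_cone A"
    using multinet_classes[OF mn] by auto
  ultimately have "{0, 1, 2 :: nat} \<subseteq> {c, cls line_infinity}" by (rule order_trans[rotated])
  then show False by auto
qed

end
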